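(* Let $n\ge3$ be an odd integer. Then the number of edges of $OD(\mathcal{D}_n)$ is $$|E(OD(\mathcal{D}_n))|=\frac12\Big(3n-1+\sum_{\substack{m\mid n\\ m>1}}\Big(m-2\phi(m)+\sum_{\lambda\mid\frac{n}{m}}\phi(\lambda m)\Big)\phi(m)\Big),$$ where $\phi$ is Euler's totient function.
   Context: The dihedral group $\mathcal{D}_n$ ($n\ge3$) is the group $\langle a,b\mid a^n=b^2=(ab)^2=e\rangle$ of order $2n$. For a finite group $G$, $o(x)$ denotes the order of $x\in G$. The order-divisor graph $OD(G)$ is the simple undirected graph with vertex set $G$, in which two distinct vertices $x,y$ are adjacent if and only if $o(x)\neq o(y)$ and either $o(x)\mid o(y)$ or $o(y)\mid o(x)$. *)

theory Defs
  imports "HOL-Algebra.Algebra" "HOL-Number_Theory.Number_Theory"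
begin

text \<open>Concrete model of the dihedral group D_n of order 2n: the pair (i, False)
  stands for a^i and (i, True) for a^i b, with i in {0..n-1}.
  Using b a^j = a^(-j) b we get (a^i b^r)(a^j b^s) = a^(i +- j) b^(r xor s).\<close>
definition dihedral :: "nat \<Rightarrow> (int \<times> bool) monoid" where
  "dihedral n = \<lparr> carrier = {0..<int n} \<times> UNIV,
     monoid.mult = (\<lambda>x y. ((if snd x then fst x - fst y else fst x + fst y) mod int n,
                          snd x \<noteq> snd y)),
     monoid.one = (0, False) \<rparr>"

definition od_adj :: "('a, 'b) monoid_scheme \<Rightarrow> 'a \<Rightarrow> 'a \<Rightarrow> bool" where
  "od_adj G x y \<longleftrightarrow> x \<noteq> y \<and> group.ord G x \<noteq> group.ord G y \<and>
     (group.ord G x dvd group.ord G y \<or> group.ord G y dvd group.ord G x)"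

definition od_edges :: "('a, 'b) monoid_scheme \<Rightarrow> 'a set set" where
  "od_edges G = {{x, y} | x y. x \<in> carrier G \<and> y \<in> carrier G \<and> od_adj G x y}"

end

theory Submission
  imports Defs
begin

text \<open>Adjacency in \<open>OD(G)\<close> depends only on the orders of the two vertices, so a vertex of
  order \<open>a\<close> has as many neighbours as there are elements whose order is a proper divisor or a
  proper multiple of \<open>a\<close>. In \<open>D\<^sub>n\<close> the \<open>n\<close> reflections have order 2, and for each
  \<open>d | n\<close> exactly \<open>\<phi>(d)\<close> rotations have order \<open>d\<close>. For odd \<open>n\<close> a reflection is adjacent
  only to the identity, and the rotations whose order is comparable with \<open>a | n\<close> weigh
  \<open>\<Sum>\<^sub>d\<^sub>|\<^sub>a \<phi>(d) = a\<close> (divisors) plus \<open>\<Sum>\<^sub>l\<^sub>|\<^sub>n\<^sub>/\<^sub>a \<phi>(l a)\<close> (multiples), minus \<open>2\<phi>(a)\<close> for the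
  order \<open>a\<close> itself counted twice. Summing degrees over all vertices gives twice the number of
  edges.\<close>

lemma dihedral_carrier [simp]: "carrier (dihedral n) = {0..<int n} \<times> UNIV"
  by (simp add: dihedral_def)

lemma dihedral_one [simp]: "\<one>\<^bsub>dihedral n\<^esub> = (0, False)"
  by (simp add: dihedral_def)

lemma dihedral_mult [simp]:
  "x \<otimes>\<^bsub>dihedral n\<^esub> y =
     ((if snd x then fst x - fst y else fst x + fst y) mod int n, snd x \<noteq> snd y)"
  by (simp add: dihedral_def)

lemma group_dihedral:
  assumes "n > 0"
  shows "group (dihedral n)"
proof (rule groupI)
  fix x y z :: "int \<times> bool"
  show "x \<otimes>\<^bsub>dihedral n\<^esub> y \<otimes>\<^bsub>dihedral n\<^esub> z =
        x \<otimes>\<^bsub>dihedral n\<^esub> (y \<otimes>\<^bsub>dihedral n\<^esub> z)"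
    by (cases x; cases y; cases z)
       (auto simp: mod_diff_left_eq mod_add_left_eq mod_diff_right_eq mod_add_right_eq algebra_simps)
next
  fix x assume x: "x \<in> carrier (dihedral n)"
  show "\<exists>y\<in>carrier (dihedral n). y \<otimes>\<^bsub>dihedral n\<^esub> x = \<one>\<^bsub>dihedral n\<^esub>"
  proof (cases "snd x")
    case True
    with x show ?thesis by (intro bexI[of _ x]) auto
  next
    case False
    with x assms show ?thesis
      by (intro bexI[of _ "(- fst x mod int n, False)"]) (auto simp: mod_simps)
  qed
qed (use assms in auto)

lemma dihedral_rotation_pow:
  "(1, False) [^]\<^bsub>dihedral n\<^esub> (k :: nat) = (int k mod int n, False)"
  by (induction k) (simp_all add: mod_simps add.commute)

lemma dihedral_reflection_pow:
  assumes "0 \<le> i" "i < int n"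
  shows "(i, True) [^]\<^bsub>dihedral n\<^esub> (k :: nat) = (if even k then (0, False) else (i, True))"
  by (induction k) (use assms in auto)

lemma ord_dihedral_rotation:
  assumes "1 < n" "j < n"
  shows "group.ord (dihedral n) (int j, False) = n div gcd j n"
proof -
  interpret group "dihedral n" using assms group_dihedral by simp
  have gen: "(1, False) \<in> carrier (dihedral n)" using assms by simp
  have "ord (1, False) = n"
    using gen by (simp add: ord_unique dihedral_rotation_pow zmod_int[symmetric] dvd_eq_mod_eq_0)
  moreover have "(int j, False) = (1, False) [^]\<^bsub>dihedral n\<^esub> j"
    using assms by (simp add: dihedral_rotation_pow)
  ultimately show ?thesis
    using assms gen by (simp add: ord_pow_gen gcd.commute)
qed

lemma ord_dihedral_reflection:
  assumes "0 \<le> i" "i < int n"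
  shows "group.ord (dihedral n) (i, True) = 2"
proof -
  interpret group "dihedral n" using assms group_dihedral by simp
  show ?thesis
    using assms by (simp add: ord_unique dihedral_reflection_pow)
qed

lemma sum_gcd_lessThan_eq_greaterThanAtMost:
  fixes n :: nat
  assumes "n > 0"
  shows "(\<Sum>j<n. f (gcd j n)) = (\<Sum>k\<in>{0<..n}. f (gcd k n))"
  by (rule sum.reindex_bij_witness[where i = "\<lambda>k. k mod n" and j = "\<lambda>j. if j = 0 then n else j"])
     (use assms in \<open>auto simp: le_less split: if_splits\<close>)

lemma sum_div_gcd_eq_sum_totient:
  fixes f :: "nat \<Rightarrow> 'a :: comm_semiring_1"
  assumes "n > 0"
  shows "(\<Sum>k\<in>{0<..n}. f (n div gcd k n)) = (\<Sum>d | d dvd n. of_nat (totient d) * f d)"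
proof -
  have "(\<Sum>k\<in>{0<..n}. f (n div gcd k n)) =
        (\<Sum>e | e dvd n. \<Sum>k | k \<in> {0<..n} \<and> gcd k n = e. f (n div gcd k n))"
    by (rule sum.group[symmetric]) (use assms in auto)
  also have "\<dots> = (\<Sum>e | e dvd n. of_nat (totient (n div e)) * f (n div e))"
  proof (intro sum.cong refl)
    fix e assume "e \<in> {e. e dvd n}"
    then have "(\<Sum>k\<in>{k\<in>{0<..n}. gcd k n = e}. f (n div gcd k n)) =
               of_nat (card {k\<in>{0<..n}. gcd k n = e}) * f (n div e)"
      by simp
    also have "card {k\<in>{0<..n}. gcd k n = e} = totient (n div e)"
      using assms \<open>e \<in> {e. e dvd n}\<close> by (intro card_gcd_eq_totient) auto
    finally show "(\<Sum>k | k \<in> {0<..n} \<and> gcd k n = e. f (n div gcd k n)) =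
                  of_nat (totient (n div e)) * f (n div e)" .
  qed
  also have "\<dots> = (\<Sum>d | d dvd n. of_nat (totient d) * f d)"
    using assms by (intro sum.reindex_bij_witness[of _ "(div) n" "(div) n"]) (auto elim: dvdE)
  finally show ?thesis .
qed

lemma sum_dihedral_carrier:
  "(\<Sum>x\<in>carrier (dihedral n). h x) = (\<Sum>j<n. h (int j, False) + h (int j, True))"
proof -
  have "(\<Sum>x\<in>carrier (dihedral n). h x) = (\<Sum>i\<in>{0..<int n}. \<Sum>b\<in>UNIV. h (i, b))"
    by (simp add: sum.cartesian_product)
  also have "\<dots> = (\<Sum>i\<in>{0..<int n}. h (i, False) + h (i, True))"
    by (simp add: UNIV_bool add.commute)
  also have "\<dots> = (\<Sum>j<n. h (int j, False) + h (int j, True))"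
    by (rule sum.reindex_bij_witness[where i = int and j = nat]) auto
  finally show ?thesis .
qed

lemma sum_dihedral_ord:
  fixes f :: "nat \<Rightarrow> 'a :: comm_semiring_1"
  assumes "1 < n"
  shows "(\<Sum>x\<in>carrier (dihedral n). f (group.ord (dihedral n) x)) =
         (\<Sum>d | d dvd n. of_nat (totient d) * f d) + of_nat n * f 2"
proof -
  have "(\<Sum>x\<in>carrier (dihedral n). f (group.ord (dihedral n) x)) =
        (\<Sum>j<n. f (n div gcd j n) + f 2)"
    unfolding sum_dihedral_carrier
    using assms by (simp add: ord_dihedral_rotation ord_dihedral_reflection)
  also have "\<dots> = (\<Sum>k\<in>{0<..n}. f (n div gcd k n)) + of_nat n * f 2"
    using assms by (simp add: sum.distrib sum_gcd_lessThan_eq_greaterThanAtMost[where f = "\<lambda>g. f (n div g)"])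
  finally show ?thesis
    using assms by (simp add: sum_div_gcd_eq_sum_totient)
qed

lemma card_od_edges_containing:
  assumes "x \<in> carrier G"
  shows "card {e \<in> od_edges G. x \<in> e} = card {y \<in> carrier G. od_adj G x y}"
proof -
  have "{e \<in> od_edges G. x \<in> e} = (\<lambda>y. {x, y}) ` {y \<in> carrier G. od_adj G x y}"
    using assms unfolding od_edges_def od_adj_def by (auto simp: insert_commute)
  moreover have "inj_on (\<lambda>y. {x, y}) {y \<in> carrier G. od_adj G x y}"
    by (auto simp: inj_on_def doubleton_eq_iff od_adj_def)
  ultimately show ?thesis by (simp add: card_image)
qed

lemma od_edges_handshake:
  assumes "finite (carrier G)"
  shows "2 * card (od_edges G) = (\<Sum>x\<in>carrier G. card {y \<in> carrier G. od_adj G x y})"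
proof -
  have "finite (od_edges G)"
  proof (rule finite_subset)
    show "od_edges G \<subseteq> (\<lambda>(x, y). {x, y}) ` (carrier G \<times> carrier G)"
      unfolding od_edges_def by auto
  qed (use assms in simp)
  moreover have "card {x \<in> carrier G. x \<in> e} = 2" if "e \<in> od_edges G" for e
    using that unfolding od_edges_def od_adj_def by (auto simp: Int_absorb1 Collect_conj_eq)
  ultimately have "(\<Sum>x\<in>carrier G. card {e \<in> od_edges G. x \<in> e}) = 2 * card (od_edges G)"
    using assms by (intro sum_multicount) auto
  then show ?thesis
    by (simp add: card_od_edges_containing)
qed

definition strict_dvd_comparable :: "nat \<Rightarrow> nat \<Rightarrow> bool" where
  "strict_dvd_comparable a b \<longleftrightarrow> a \<noteq> b \<and> (a dvd b \<or> b dvd a)"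

lemma od_adj_iff_ord:
  "od_adj G x y \<longleftrightarrow> strict_dvd_comparable (group.ord G x) (group.ord G y)"
  unfolding od_adj_def strict_dvd_comparable_def by auto

lemma strict_dvd_comparable_commute:
  "strict_dvd_comparable a b \<longleftrightarrow> strict_dvd_comparable b a"
  unfolding strict_dvd_comparable_def by auto

lemma strict_dvd_comparable_2_iff:
  assumes "odd a"
  shows "strict_dvd_comparable a 2 \<longleftrightarrow> a = 1"
proof -
  have "a \<le> 2 \<Longrightarrow> a = 1" using assms by presburger
  then show ?thesis
    using assms dvd_imp_le[of a 2] unfolding strict_dvd_comparable_def by auto
qed

lemma sum_totient_strict_dvd_comparable:
  assumes "n > 0" "a dvd n"
  shows "(\<Sum>d | d dvd n. real (totient d) * of_bool (strict_dvd_comparable a d)) =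
         real a - 2 * real (totient a) + (\<Sum>l | l dvd n div a. real (totient (l * a)))"
proof -
  have a: "a > 0" using assms by (auto intro: gr0I)
  have fin: "finite {d. d dvd n}" using assms by simp
  have split: "of_bool (strict_dvd_comparable a d) =
               of_bool (d dvd a) + of_bool (a dvd d) - 2 * (of_bool (d = a) :: real)" for d
    unfolding strict_dvd_comparable_def using dvd_antisym[of a d] by auto
  have "(\<Sum>d | d dvd n. real (totient d) * of_bool (strict_dvd_comparable a d)) =
        (\<Sum>d | d dvd n. real (totient d) * of_bool (d dvd a)) +
        (\<Sum>d | d dvd n. real (totient d) * of_bool (a dvd d)) -
        2 * (\<Sum>d | d dvd n. real (totient d) * of_bool (d = a))"
    unfolding split by (simp add: algebra_simps sum.distrib sum_subtractf sum_distrib_left)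
  also have "(\<Sum>d | d dvd n. real (totient d) * of_bool (d dvd a)) = real a"
  proof -
    have "{d. d dvd n} \<inter> {d. d dvd a} = {d. d dvd a}"
      using assms dvd_trans by blast
    moreover have "(\<Sum>d | d dvd a. real (totient d)) = real a"
      by (metis of_nat_sum totient_divisor_sum)
    ultimately show ?thesis by (simp only: sum_mult_of_bool_eq[OF fin])
  qed
  also have "(\<Sum>d | d dvd n. real (totient d) * of_bool (a dvd d)) =
             (\<Sum>l | l dvd n div a. real (totient (l * a)))"
  proof -
    have "{d. d dvd n} \<inter> {d. a dvd d} = (\<lambda>l. l * a) ` {l. l dvd n div a}"
      using assms a by (auto simp: dvd_div_iff_mult elim!: dvdE)
    then show ?thesis
      by (simp only: sum_mult_of_bool_eq[OF fin]) (use a in \<open>simp add: sum.reindex inj_on_def\<close>)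
  qed
  also have "(\<Sum>d | d dvd n. real (totient d) * of_bool (d = a)) = real (totient a)"
  proof -
    have "{d. d dvd n} \<inter> {d. d = a} = {a}" using assms by auto
    then show ?thesis by (simp only: sum_mult_of_bool_eq[OF fin]) simp
  qed
  finally show ?thesis by simp
qed

definition od_dihedral_degree :: "nat \<Rightarrow> nat \<Rightarrow> real" where
  "od_dihedral_degree n a =
     (\<Sum>d | d dvd n. real (totient d) * of_bool (strict_dvd_comparable a d)) +
     real n * of_bool (strict_dvd_comparable a 2)"

lemma card_od_adj_dihedral:
  assumes "1 < n"
  shows "real (card {y \<in> carrier (dihedral n). od_adj (dihedral n) x y}) =
         od_dihedral_degree n (group.ord (dihedral n) x)"
proof -
  have "real (card {y \<in> carrier (dihedral n). od_adj (dihedral n) x y}) =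
        (\<Sum>y\<in>carrier (dihedral n). of_bool (od_adj (dihedral n) x y))"
    by (simp add: Int_def)
  also have "\<dots> = od_dihedral_degree n (group.ord (dihedral n) x)"
    unfolding od_adj_iff_ord od_dihedral_degree_def using assms by (rule sum_dihedral_ord)
  finally show ?thesis .
qed

lemma two_card_od_edges_dihedral:
  assumes "1 < n"
  shows "2 * real (card (od_edges (dihedral n))) =
         (\<Sum>d | d dvd n. real (totient d) * od_dihedral_degree n d) +
         real n * od_dihedral_degree n 2"
proof -
  have "2 * card (od_edges (dihedral n)) =
        (\<Sum>x\<in>carrier (dihedral n). card {y \<in> carrier (dihedral n). od_adj (dihedral n) x y})"
    by (rule od_edges_handshake) simp
  then have "2 * real (card (od_edges (dihedral n))) =
        (\<Sum>x\<in>carrier (dihedral n). real (card {y \<in> carrier (dihedral n). od_adj (dihedral n) x y}))"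
    by (simp del: dihedral_carrier flip: of_nat_sum)
  also have "\<dots> = (\<Sum>x\<in>carrier (dihedral n). od_dihedral_degree n (group.ord (dihedral n) x))"
    using assms by (simp add: card_od_adj_dihedral del: dihedral_carrier)
  also have "\<dots> = (\<Sum>d | d dvd n. real (totient d) * od_dihedral_degree n d) +
                  real n * od_dihedral_degree n 2"
    using assms by (rule sum_dihedral_ord)
  finally show ?thesis .
qed

lemma od_dihedral_degree_2:
  assumes "odd n"
  shows "od_dihedral_degree n 2 = 1"
proof -
  have "n > 0" using assms by (auto intro: gr0I)
  have "strict_dvd_comparable 2 d \<longleftrightarrow> d = 1" if "d dvd n" for d
    using that assms strict_dvd_comparable_2_iff[of d] strict_dvd_comparable_commute
    by (meson dvd_trans)
  then have "{d. d dvd n} \<inter> {d. strict_dvd_comparable 2 d} = {1}" by auto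
  then show ?thesis
    using \<open>n > 0\<close> by (simp add: od_dihedral_degree_def strict_dvd_comparable_def)
qed

lemma od_dihedral_degree_divisor:
  assumes "odd n" "a dvd n"
  shows "od_dihedral_degree n a =
         real a - 2 * real (totient a) + (\<Sum>l | l dvd n div a. real (totient (l * a))) +
         real n * of_bool (a = 1)"
proof -
  have "n > 0" using assms by (auto intro: gr0I)
  moreover have "odd a" using assms by (meson dvd_trans)
  ultimately show ?thesis
    unfolding od_dihedral_degree_def
    by (simp only: sum_totient_strict_dvd_comparable assms strict_dvd_comparable_2_iff[OF \<open>odd a\<close>])
qed

theorem mainTheorem19:
  fixes n :: nat
  assumes "n \<ge> 3" and "odd n"
  shows "real (card (od_edges (dihedral n))) =
    (1/2) * (3 * real n - 1 +
      (\<Sum>m\<in>{m. m dvd n \<and> m > 1}.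
         (real m - 2 * real (totient m) +
          (\<Sum>l\<in>{l. l dvd (n div m)}. real (totient (l * m)))) * real (totient m)))"
proof -
  define F where "F m = real m - 2 * real (totient m) + (\<Sum>l | l dvd n div m. real (totient (l * m)))"
    for m
  have "n > 0" using assms by simp
  then have divisors: "{d. d dvd n} = insert 1 {m. m dvd n \<and> m > 1}"
    by (auto dest: dvd_pos_nat)
  have fin: "finite {m. m dvd n \<and> m > 1}" using \<open>n > 0\<close> by simp
  have "F 1 = real n - 1"
    using totient_divisor_sum[of n] by (simp add: F_def flip: of_nat_sum)
  have "(\<Sum>d | d dvd n. real (totient d) * od_dihedral_degree n d) =
        (\<Sum>d | d dvd n. real (totient d) * F d + real n * of_bool (d = 1))"
    using assms(2) by (intro sum.cong) (auto simp: od_dihedral_degree_divisor F_def algebra_simps)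
  also have "\<dots> = (\<Sum>d | d dvd n. real (totient d) * F d) + real n"
    using fin by (simp add: sum.distrib divisors)
  also have "(\<Sum>d | d dvd n. real (totient d) * F d) =
             real n - 1 + (\<Sum>m | m dvd n \<and> m > 1. F m * real (totient m))"
    using fin \<open>F 1 = real n - 1\<close> by (simp add: divisors mult.commute)
  finally show ?thesis
    using two_card_od_edges_dihedral[of n] od_dihedral_degree_2[of n] assms
    unfolding F_def by simp
qed

end
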